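(* Let $\alpha>0$ and let $(d_k:k\geq1)$ be a sequence of positive integers with $d_{k+1}\geq(1+\alpha)d_k$ for all $k$. Let $C_\alpha>0$ be a constant such that $\big\|(g_k'/d_k)_{k\geq1}\big\|_{L^1(\ell^2)}\leq C_\alpha\|(g_k)_{k\geq1}\|_{L^1(\ell^2)}$ for every sequence $g_k\in H^1_{d_k}(\mathbb{D})$; such a constant exists. Let $(f_k:k\geq1)$ satisfy $f_k\in H^1_{d_k}(\mathbb{D})$, let $0<\varepsilon<\frac12$, and let $(M_k:k\geq1)$ be positive integers with $d_k\leq\varepsilon C_\alpha^{-1}M_k$ for all $k$. Then $$(1-\varepsilon)\big\|(\mathbb{E}_{M_k}|f_k|)_{k=1}^\infty\big\|_{L^1(\ell^2)}\leq\big\|(f_k)_{k=1}^\infty\big\|_{L^1(\ell^2)}\leq\frac{1-\varepsilon}{1-2\varepsilon}\big\|(\mathbb{E}_{M_k}f_k)_{k=1}^\infty\big\|_{L^1(\ell^2)}.$$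
   Context: $\mathbb{T}$ is identified with $[0,1)$ with Lebesgue measure, and functions are viewed as functions of $t\in\mathbb{T}$. Define $H^1_n(\mathbb{D})=\mathrm{span}\{e^{2\pi ijt}:0\leq j\leq n\}$, and let $g'$ denote the derivative in $t$. For a sequence of functions $(g_k)$ on $\mathbb{T}$, define $\|(g_k)\|_{L^1(\ell^2)}=\int_{\mathbb{T}}\big(\sum_k|g_k(t)|^2\big)^{1/2}dt$. For a positive integer $N$, $$\mathbb{E}_Ng=\sum_{k=0}^{N-1}N\,\mathbb{1}_{[k/N,(k+1)/N)}\int_{k/N}^{(k+1)/N}g(x)\,dx.$$ *)

theory Defs
  imports "HOL-Analysis.Analysis"
begin

text \<open>Analytic trigonometric polynomials of degree at most n, as functions of t
  (the torus T is identified with [0,1); the functions are 1-periodic).\<close>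
definition H1 :: "nat \<Rightarrow> (real \<Rightarrow> complex) set" where
  "H1 n = {f. \<exists>c :: nat \<Rightarrow> complex.
       \<forall>t. f t = (\<Sum>j\<le>n. c j * exp (2 * of_real pi * \<i> * of_nat j * of_real t))}"

definition l2pt :: "(nat \<Rightarrow> real \<Rightarrow> 'a::real_normed_vector) \<Rightarrow> real \<Rightarrow> ennreal" where
  "l2pt g t = (if summable (\<lambda>k. (norm (g k t))\<^sup>2)
               then ennreal (sqrt (\<Sum>k. (norm (g k t))\<^sup>2)) else top)"

definition L1l2 :: "(nat \<Rightarrow> real \<Rightarrow> 'a::real_normed_vector) \<Rightarrow> ennreal" where
  "L1l2 g = (\<integral>\<^sup>+ t \<in> {0..<1}. l2pt g t \<partial>lborel)"

definition condE :: "nat \<Rightarrow> (real \<Rightarrow> 'a::real_normed_vector) \<Rightarrow> real \<Rightarrow> 'a" where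
  "condE N g t = (\<Sum>k<N. (real N * indicator {real k / real N ..< real (k+1) / real N} t)
                      *\<^sub>R integral {real k / real N .. real (k+1) / real N} g)"

end

theory Submission
  imports Defs
begin

text \<open>
  Since \<open>f k\<close> is a trigonometric polynomial of degree \<open>d k\<close>, its Taylor series at \<open>t\<close>
  converges everywhere; together with \<open>d k / M k \<le> \<epsilon> / C\<close> it bounds the increments
  \<open>|f k s - f k t|\<close> for \<open>|s - t| \<le> 1 / M k\<close> by
  \<open>\<Sum>m\<ge>1. (\<epsilon> / C)^m / m! * |f k^(m) t| / d k^m\<close>.
  The average over the cell of length \<open>1 / M k\<close> containing \<open>t\<close> only sees such increments,
  so \<open>|E |f k| - |f k||\<close> and \<open>|E (f k) - f k|\<close> are bounded pointwise by this series.
  Iterating the Bernstein inequality bounds the L1(l2) norm of \<open>(f k^(m) / d k^m)\<^sub>k\<close>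
  by \<open>C^m\<close> times that of \<open>(f k)\<^sub>k\<close>, so the averaging error is at most \<open>e^\<epsilon> - 1\<close>
  times the norm of \<open>(f k)\<^sub>k\<close>. Both inequalities follow since \<open>(1 - \<epsilon>) e^\<epsilon> \<le> 1\<close>,
  the second one by absorbing the error into the left-hand side. Absorption needs a finite
  norm, so it is carried out for the first \<open>K\<close> functions; the full norm is the supremum
  over \<open>K\<close>.
\<close>

section \<open>Trigonometric polynomials\<close>

definition trig_poly_deriv :: "(nat \<Rightarrow> complex) \<Rightarrow> nat \<Rightarrow> nat \<Rightarrow> real \<Rightarrow> complex" where
  "trig_poly_deriv c n m t =
     (\<Sum>j\<le>n. c j * (2 * of_real pi * \<i> * of_nat j) ^ m
                 * exp (2 * of_real pi * \<i> * of_nat j * of_real t))"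

lemma H1_eq_range: "H1 n = range (\<lambda>c. trig_poly_deriv c n 0)"
  unfolding H1_def trig_poly_deriv_def by (auto simp: fun_eq_iff)

lemma zero_in_H1: "(\<lambda>t. 0) \<in> H1 n"
proof -
  have "(\<lambda>t. 0) = trig_poly_deriv (\<lambda>j. 0) n 0"
    by (simp add: fun_eq_iff trig_poly_deriv_def)
  then show ?thesis
    unfolding H1_eq_range by blast
qed

lemma trig_poly_deriv_divide_in_H1: "(\<lambda>t. trig_poly_deriv c n m t / x) \<in> H1 n"
proof -
  have "(\<lambda>t. trig_poly_deriv c n m t / x)
          = trig_poly_deriv (\<lambda>j. c j * (2 * of_real pi * \<i> * of_nat j) ^ m / x) n 0"
    by (simp add: fun_eq_iff trig_poly_deriv_def sum_divide_distrib)
  then show ?thesis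
    unfolding H1_eq_range by blast
qed

lemma has_vector_derivative_trig_poly_deriv:
  "(trig_poly_deriv c n m has_vector_derivative trig_poly_deriv c n (Suc m) t) (at t)"
proof -
  have *: "((\<lambda>t. c j * a ^ m * exp (a * of_real t)) has_vector_derivative
             c j * a ^ Suc m * exp (a * of_real t)) (at t)" for a :: complex and j
  proof -
    have "((\<lambda>z. c j * a ^ m * exp (a * z)) has_field_derivative c j * a ^ Suc m * exp (a * of_real t))
            (at (of_real t))"
      by (auto intro!: derivative_eq_intros)
    from has_vector_derivative_real_field[OF this] show ?thesis .
  qed
  show ?thesis
    unfolding trig_poly_deriv_def by (rule has_vector_derivative_sum, rule *)
qed

lemma continuous_on_trig_poly_deriv: "continuous_on S (trig_poly_deriv c n m)"
  using has_vector_derivative_trig_poly_deriv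
  by (meson continuous_on_vector_derivative has_vector_derivative_at_within)

lemma borel_measurable_trig_poly_deriv: "trig_poly_deriv c n m \<in> borel_measurable lborel"
  by (simp add: borel_measurable_continuous_onI continuous_on_trig_poly_deriv)

lemma norm_trig_poly_deriv_le:
  "norm (trig_poly_deriv c n m t) \<le> (\<Sum>j\<le>n. norm (c j)) * (2 * pi * n) ^ m"
proof -
  have "norm (exp (2 * of_real pi * \<i> * of_nat j * of_real t)) = 1" for j
    by (simp add: norm_exp)
  moreover have "(2 * pi * j) ^ m \<le> (2 * pi * n) ^ m" if "j \<le> n" for j
    using that by (intro power_mono) auto
  ultimately have "norm (trig_poly_deriv c n m t) \<le> (\<Sum>j\<le>n. norm (c j) * (2 * pi * n) ^ m)"
    unfolding trig_poly_deriv_def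
    by (intro order_trans[OF norm_sum] sum_mono) (auto simp: norm_mult norm_power intro!: mult_left_mono)
  then show ?thesis
    by (simp add: sum_distrib_right)
qed

lemma trig_poly_taylor:
  "(\<lambda>m. trig_poly_deriv c n m t * of_real ((s - t) ^ m / fact m)) sums trig_poly_deriv c n 0 s"
proof -
  have *: "(\<lambda>m. c j * a ^ m * exp (a * of_real t) * of_real ((s - t) ^ m / fact m))
             sums (c j * a ^ 0 * exp (a * of_real s))" for j and a :: complex
  proof -
    have "(\<lambda>m. (a * of_real (s - t)) ^ m /\<^sub>R fact m) sums exp (a * of_real (s - t))"
      by (rule exp_converges)
    then have "(\<lambda>m. c j * exp (a * of_real t) * ((a * of_real (s - t)) ^ m /\<^sub>R fact m))
                 sums (c j * exp (a * of_real t) * exp (a * of_real (s - t)))"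
      by (rule sums_mult)
    then show ?thesis
      by (simp add: power_mult_distrib scaleR_conv_of_real divide_inverse mult_ac
          flip: exp_add distrib_left)
  qed
  show ?thesis
    unfolding trig_poly_deriv_def sum_distrib_right by (rule sums_sum, rule *)
qed

lemma summable_trig_poly_deriv_taylor:
  "summable (\<lambda>m. norm (trig_poly_deriv c n m t) * h ^ m / fact m)"
proof (rule summable_comparison_test')
  let ?B = "\<Sum>j\<le>n. norm (c j)"
  show "summable (\<lambda>m. ?B * (inverse (fact m) * (2 * pi * n * \<bar>h\<bar>) ^ m))"
    by (intro summable_mult summable_exp)
  show "norm (norm (trig_poly_deriv c n m t) * h ^ m / fact m)
          \<le> ?B * (inverse (fact m) * (2 * pi * n * \<bar>h\<bar>) ^ m)" for m
    using mult_right_mono[OF norm_trig_poly_deriv_le, of "\<bar>h\<bar> ^ m / fact m" c n m t]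
    by (simp add: abs_mult power_abs power_mult_distrib field_simps)
qed

lemma norm_trig_poly_increment_le:
  assumes "\<bar>s - t\<bar> \<le> h"
  shows "norm (trig_poly_deriv c n 0 s - trig_poly_deriv c n 0 t)
           \<le> (\<Sum>m. norm (trig_poly_deriv c n (Suc m) t) * h ^ Suc m / fact (Suc m))"
proof -
  have bound: "norm (trig_poly_deriv c n k t * of_real ((s - t) ^ k / fact k))
                 \<le> norm (trig_poly_deriv c n k t) * h ^ k / fact k" for k
  proof -
    have "\<bar>(s - t) ^ k / fact k\<bar> \<le> h ^ k / fact k"
      using assms by (auto simp: abs_divide power_abs intro!: divide_right_mono power_mono)
    then show ?thesis
      by (simp only: norm_mult norm_of_real times_divide_eq_right[symmetric] mult_left_mono norm_ge_zero)
  qed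
  have "(\<lambda>m. trig_poly_deriv c n (Suc m) t * of_real ((s - t) ^ Suc m / fact (Suc m)))
          sums (trig_poly_deriv c n 0 s - trig_poly_deriv c n 0 t)"
    using trig_poly_taylor[of c n t s] by (subst sums_Suc_iff) simp
  then have "trig_poly_deriv c n 0 s - trig_poly_deriv c n 0 t
               = (\<Sum>m. trig_poly_deriv c n (Suc m) t * of_real ((s - t) ^ Suc m / fact (Suc m)))"
    by (rule sums_unique)
  also have "norm \<dots> \<le> (\<Sum>m. norm (trig_poly_deriv c n (Suc m) t) * h ^ Suc m / fact (Suc m))"
    using summable_Suc_iff[where f = "\<lambda>m. norm (trig_poly_deriv c n m t) * h ^ m / fact m"]
    by (intro norm_suminf_le bound) (simp add: summable_trig_poly_deriv_taylor)
  finally show ?thesis .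
qed

section \<open>Averages over a uniform partition\<close>

lemma mem_cell_iff:
  assumes "N > 0" "0 \<le> t"
  shows "t \<in> {real k / real N ..< real (k + 1) / real N} \<longleftrightarrow> k = nat \<lfloor>real N * t\<rfloor>"
proof -
  have "t \<in> {real k / real N ..< real (k + 1) / real N} \<longleftrightarrow> \<lfloor>real N * t\<rfloor> = int k"
    using assms by (simp add: floor_eq_iff field_simps)
  also have "\<dots> \<longleftrightarrow> k = nat \<lfloor>real N * t\<rfloor>"
    using assms by auto
  finally show ?thesis .
qed

lemma condE_eq_cell_average:
  assumes "N > 0" "t \<in> {0..<1}"
  obtains k where "k < N" "t \<in> {real k / real N ..< real (k + 1) / real N}"
    "condE N g t = real N *\<^sub>R integral {real k / real N .. real (k + 1) / real N} g"
proof
  let ?k = "nat \<lfloor>real N * t\<rfloor>"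
  show cell: "t \<in> {real ?k / real N ..< real (?k + 1) / real N}"
    using mem_cell_iff[OF assms(1), of t ?k] assms(2) by simp
  have "real ?k \<le> real N * t" "real N * t < real N"
    using cell assms by (auto simp: field_simps)
  then show "?k < N"
    by linarith
  have "condE N g t = (\<Sum>k<N. if k = ?k
                         then real N *\<^sub>R integral {real k / real N .. real (k + 1) / real N} g else 0)"
    unfolding condE_def using mem_cell_iff[OF assms(1)] assms(2)
    by (intro sum.cong) (auto simp: indicator_def)
  also have "\<dots> = real N *\<^sub>R integral {real ?k / real N .. real (?k + 1) / real N} g"
    using \<open>?k < N\<close> by simp
  finally show "condE N g t = \<dots>" .
qed

lemma norm_condE_diff_le:
  fixes g :: "real \<Rightarrow> 'a::banach"
  assumes N: "N > 0" and t: "t \<in> {0..<1}" and g: "continuous_on {0..1} g"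
    and B: "\<And>s. s \<in> {0..1} \<Longrightarrow> \<bar>s - t\<bar> \<le> 1 / real N \<Longrightarrow> norm (g s - g t) \<le> B"
  shows "norm (condE N g t - g t) \<le> B"
proof -
  obtain k where "k < N" and cell: "t \<in> {real k / real N ..< real (k + 1) / real N}"
    and E: "condE N g t = real N *\<^sub>R integral {real k / real N .. real (k + 1) / real N} g"
    using condE_eq_cell_average[OF N t] .
  define a b where "a = real k / real N" and "b = real (k + 1) / real N"
  have Eab: "condE N g t = real N *\<^sub>R integral {a..b} g"
    unfolding a_def b_def by (rule E)
  have ba: "b - a = 1 / real N"
    using N by (simp add: a_def b_def field_simps)
  have "a \<le> b" and sub: "{a..b} \<subseteq> {0..1}"
    using \<open>k < N\<close> by (auto simp: a_def b_def field_simps)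
  have "condE N g t - g t = real N *\<^sub>R integral {a..b} (\<lambda>s. g s - g t)"
    using N ba \<open>a \<le> b\<close> continuous_on_subset[OF g sub]
    by (simp add: Eab integral_diff integrable_continuous_interval scaleR_diff_right)
  also have "norm \<dots> \<le> real N * (B * (b - a))"
  proof -
    have "norm (integral {a..b} (\<lambda>s. g s - g t)) \<le> B * (b - a)"
    proof (rule integral_bound)
      show "continuous_on {a..b} (\<lambda>s. g s - g t)"
        using continuous_on_subset[OF g sub] by (intro continuous_intros)
      show "norm (g s - g t) \<le> B" if "s \<in> {a..b}" for s
      proof (rule B)
        show "s \<in> {0..1}"
          using that sub by auto
        show "\<bar>s - t\<bar> \<le> 1 / real N"
          using that cell ba by (auto simp: a_def b_def)
      qed
    qed (use cell in \<open>auto simp: a_def b_def\<close>)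
    then show ?thesis
      by (simp add: mult_left_mono)
  qed
  finally show ?thesis
    using N ba by simp
qed

lemma borel_measurable_condE:
  fixes g :: "real \<Rightarrow> 'a::{banach, second_countable_topology}"
  shows "condE N g \<in> borel_measurable lborel"
  unfolding condE_def by measurable

section \<open>Truncated L1(l2) norms\<close>

abbreviation torus_measure :: "real measure" where
  "torus_measure \<equiv> restrict_space lborel {0..<1}"

definition L1l2_upto :: "nat \<Rightarrow> (nat \<Rightarrow> real \<Rightarrow> 'a::real_normed_vector) \<Rightarrow> ennreal" where
  "L1l2_upto K g = (\<integral>\<^sup>+ t. ennreal (L2_set (\<lambda>k. norm (g k t)) {..<K}) \<partial>torus_measure)"

lemma L1l2_torus: "L1l2 g = (\<integral>\<^sup>+ t. l2pt g t \<partial>torus_measure)"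
  unfolding L1l2_def by (subst nn_integral_restrict_space) auto

lemma L2_set_le_l2pt: "ennreal (L2_set (\<lambda>k. norm (g k t)) {..<K}) \<le> l2pt g t"
proof (cases "summable (\<lambda>k. (norm (g k t))\<^sup>2)")
  case True
  then have "(\<Sum>k<K. (norm (g k t))\<^sup>2) \<le> (\<Sum>k. (norm (g k t))\<^sup>2)"
    by (intro sum_le_suminf) auto
  then show ?thesis
    using True unfolding l2pt_def L2_set_def by (auto intro!: ennreal_leI)
qed (simp add: l2pt_def)

lemma l2pt_eq_SUP: "l2pt g t = (SUP K. ennreal (L2_set (\<lambda>k. norm (g k t)) {..<K}))"
proof (rule antisym)
  show "(SUP K. ennreal (L2_set (\<lambda>k. norm (g k t)) {..<K})) \<le> l2pt g t"
    by (rule SUP_least, rule L2_set_le_l2pt)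
next
  show "l2pt g t \<le> (SUP K. ennreal (L2_set (\<lambda>k. norm (g k t)) {..<K}))"
  proof (cases "summable (\<lambda>k. (norm (g k t))\<^sup>2)")
    case True
    then have "(\<lambda>K. \<Sum>k<K. (norm (g k t))\<^sup>2) \<longlonglongrightarrow> (\<Sum>k. (norm (g k t))\<^sup>2)"
      by (rule summable_LIMSEQ)
    then have "(\<lambda>K. ennreal (L2_set (\<lambda>k. norm (g k t)) {..<K})) \<longlonglongrightarrow> l2pt g t"
      using True unfolding L2_set_def l2pt_def by (auto intro!: tendsto_intros)
    then show ?thesis
      by (rule LIMSEQ_le_const2) (metis SUP_upper UNIV_I)
  next
    case False
    have "\<exists>K. real n \<le> L2_set (\<lambda>k. norm (g k t)) {..<K}" for n
    proof (rule ccontr)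
      assume "\<nexists>K. real n \<le> L2_set (\<lambda>k. norm (g k t)) {..<K}"
      then have "(\<Sum>k<K. (norm (g k t))\<^sup>2) \<le> (real n)\<^sup>2" for K
        unfolding L2_set_def by (metis linorder_le_cases of_nat_0_le_iff real_le_rsqrt)
      then have "summable (\<lambda>k. (norm (g k t))\<^sup>2)"
        by (intro summableI_nonneg_bounded) auto
      with False show False by simp
    qed
    then have "(SUP K. ennreal (L2_set (\<lambda>k. norm (g k t)) {..<K})) = top"
      by (intro ennreal_SUP_eq_top) (auto simp: ennreal_of_nat_eq_real_of_nat intro: ennreal_leI)
    then show ?thesis
      by (simp only: top_greatest)
  qed
qed

lemma L1l2_upto_le_L1l2: "L1l2_upto K g \<le> L1l2 g"
  unfolding L1l2_upto_def L1l2_torus by (intro nn_integral_mono L2_set_le_l2pt)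

lemma borel_measurable_L2_set_norm:
  assumes "\<And>k. g k \<in> borel_measurable lborel"
  shows "(\<lambda>t. ennreal (L2_set (\<lambda>k. norm (g k t)) {..<K})) \<in> borel_measurable torus_measure"
proof -
  have "(\<lambda>t. ennreal (L2_set (\<lambda>k. norm (g k t)) {..<K})) \<in> borel_measurable lborel"
    unfolding L2_set_def using assms by measurable
  then show ?thesis
    by (rule measurable_restrict_space1)
qed

lemma L1l2_eq_SUP_upto:
  fixes g :: "nat \<Rightarrow> real \<Rightarrow> 'a::real_normed_vector"
  assumes "\<And>k. g k \<in> borel_measurable lborel"
  shows "L1l2 g = (SUP K. L1l2_upto K g)"
proof -
  have "incseq (\<lambda>K t. ennreal (L2_set (\<lambda>k. norm (g k t)) {..<K}))"
    unfolding incseq_def le_fun_def L2_set_def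
    by (auto intro!: ennreal_leI real_sqrt_le_mono sum_mono2)
  then show ?thesis
    unfolding L1l2_torus L1l2_upto_def l2pt_eq_SUP
    using borel_measurable_L2_set_norm[OF assms] by (rule nn_integral_monotone_convergence_SUP)
qed

lemma L1l2_truncation: "L1l2 (\<lambda>k t. if k < K then g k t else 0) = L1l2_upto K g"
proof -
  let ?h = "\<lambda>k t. if k < K then g k t else 0"
  have "l2pt ?h t = ennreal (L2_set (\<lambda>k. norm (g k t)) {..<K})" for t
  proof -
    have vanish: "\<And>k. k \<notin> {..<K} \<Longrightarrow> (norm (?h k t))\<^sup>2 = 0"
      by simp
    have "summable (\<lambda>k. (norm (?h k t))\<^sup>2)"
      by (rule summable_finite[of "{..<K}", OF _ vanish]) simp
    moreover have "(\<Sum>k. (norm (?h k t))\<^sup>2) = (\<Sum>k<K. (norm (?h k t))\<^sup>2)"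
      by (rule suminf_finite[OF _ vanish]) simp
    ultimately show ?thesis
      unfolding l2pt_def L2_set_def by simp
  qed
  then show ?thesis
    unfolding L1l2_torus L1l2_upto_def by (intro nn_integral_cong) simp
qed

lemma L1l2_upto_less_top:
  assumes "\<And>k t. k < K \<Longrightarrow> t \<in> {0..<1} \<Longrightarrow> norm (g k t) \<le> B k"
  shows "L1l2_upto K g < top"
proof -
  have "L1l2_upto K g \<le> (\<integral>\<^sup>+ t. ennreal (\<Sum>k<K. B k) \<partial>torus_measure)"
    unfolding L1l2_upto_def
  proof (intro nn_integral_mono ennreal_leI)
    fix t assume "t \<in> space torus_measure"
    then have "L2_set (\<lambda>k. norm (g k t)) {..<K} \<le> (\<Sum>k<K. norm (g k t))"
      by (intro L2_set_le_sum) auto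
    also have "\<dots> \<le> (\<Sum>k<K. B k)"
      using assms \<open>t \<in> space torus_measure\<close> by (intro sum_mono) (auto simp: space_restrict_space)
    finally show "L2_set (\<lambda>k. norm (g k t)) {..<K} \<le> (\<Sum>k<K. B k)" .
  qed
  also have "\<dots> < top"
    by (simp add: emeasure_restrict_space)
  finally show ?thesis .
qed

lemma L2_set_sum_le:
  assumes "finite M"
  shows "L2_set (\<lambda>k. \<Sum>m\<in>M. h m k) A \<le> (\<Sum>m\<in>M. L2_set (h m) A)"
  using assms
proof (induction M rule: finite_induct)
  case (insert m M)
  have "L2_set (\<lambda>k. h m k + (\<Sum>m\<in>M. h m k)) A \<le> L2_set (h m) A + L2_set (\<lambda>k. \<Sum>m\<in>M. h m k) A"
    by (rule L2_set_triangle_ineq)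
  with insert show ?case
    by simp
qed (simp add: L2_set_def)

lemma L2_set_suminf_le:
  assumes "finite A" "\<And>k. k \<in> A \<Longrightarrow> summable (\<lambda>m. h m k)"
  shows "ennreal (L2_set (\<lambda>k. \<Sum>m. h m k) A) \<le> (\<Sum>m. ennreal (L2_set (h m) A))"
proof (rule LIMSEQ_le_const2)
  show "(\<lambda>N. ennreal (L2_set (\<lambda>k. \<Sum>m<N. h m k) A)) \<longlonglongrightarrow> ennreal (L2_set (\<lambda>k. \<Sum>m. h m k) A)"
    unfolding L2_set_def using assms(2) by (intro tendsto_intros summable_LIMSEQ)
  have "ennreal (L2_set (\<lambda>k. \<Sum>m<N. h m k) A) \<le> (\<Sum>m. ennreal (L2_set (h m) A))" for N
  proof -
    have "ennreal (L2_set (\<lambda>k. \<Sum>m<N. h m k) A) \<le> ennreal (\<Sum>m<N. L2_set (h m) A)"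
      by (intro ennreal_leI L2_set_sum_le) simp
    also have "\<dots> = (\<Sum>m<N. ennreal (L2_set (h m) A))"
      by (simp add: sum_ennreal)
    also have "\<dots> \<le> (\<Sum>m. ennreal (L2_set (h m) A))"
      by (rule sum_le_suminf) auto
    finally show ?thesis .
  qed
  then show "\<exists>N. \<forall>n\<ge>N. ennreal (L2_set (\<lambda>k. \<Sum>m<n. h m k) A) \<le> (\<Sum>m. ennreal (L2_set (h m) A))"
    by blast
qed

lemma L1l2_upto_le_add_suminf:
  fixes A :: "nat \<Rightarrow> real \<Rightarrow> 'a::real_normed_vector" and B :: "nat \<Rightarrow> real \<Rightarrow> 'b::real_normed_vector"
    and G :: "nat \<Rightarrow> nat \<Rightarrow> real \<Rightarrow> 'c::real_normed_vector"
  assumes B: "\<And>k. B k \<in> borel_measurable lborel" and G: "\<And>m k. G m k \<in> borel_measurable lborel"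
    and w: "\<And>m. 0 \<le> w m"
    and summable: "\<And>k t. k < K \<Longrightarrow> t \<in> {0..<1} \<Longrightarrow> summable (\<lambda>m. w m * norm (G m k t))"
    and pointwise: "\<And>k t. k < K \<Longrightarrow> t \<in> {0..<1} \<Longrightarrow>
                      norm (A k t) \<le> norm (B k t) + (\<Sum>m. w m * norm (G m k t))"
  shows "L1l2_upto K A \<le> L1l2_upto K B + (\<Sum>m. ennreal (w m) * L1l2_upto K (G m))"
proof -
  let ?LA = "\<lambda>t. L2_set (\<lambda>k. norm (A k t)) {..<K}"
  let ?LB = "\<lambda>t. L2_set (\<lambda>k. norm (B k t)) {..<K}"
  let ?LG = "\<lambda>m t. L2_set (\<lambda>k. norm (G m k t)) {..<K}"
  have "ennreal (?LA t) \<le> ennreal (?LB t) + (\<Sum>m. ennreal (w m) * ennreal (?LG m t))"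
    if t: "t \<in> space torus_measure" for t
  proof -
    have "?LA t \<le> L2_set (\<lambda>k. norm (B k t) + (\<Sum>m. w m * norm (G m k t))) {..<K}"
      using pointwise t by (intro L2_set_mono) (auto simp: space_restrict_space)
    also have "\<dots> \<le> ?LB t + L2_set (\<lambda>k. \<Sum>m. w m * norm (G m k t)) {..<K}"
      by (rule L2_set_triangle_ineq)
    finally have "ennreal (?LA t)
                    \<le> ennreal (?LB t) + ennreal (L2_set (\<lambda>k. \<Sum>m. w m * norm (G m k t)) {..<K})"
      by (simp add: ennreal_leI flip: ennreal_plus)
    also have "ennreal (L2_set (\<lambda>k. \<Sum>m. w m * norm (G m k t)) {..<K})
                 \<le> (\<Sum>m. ennreal (L2_set (\<lambda>k. w m * norm (G m k t)) {..<K}))"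
      using summable t by (intro L2_set_suminf_le) (auto simp: space_restrict_space)
    also have "\<dots> = (\<Sum>m. ennreal (w m) * ennreal (?LG m t))"
      by (intro suminf_cong) (simp add: w ennreal_mult flip: L2_set_right_distrib)
    finally show ?thesis
      by (simp add: add_left_mono)
  qed
  then have "L1l2_upto K A
               \<le> (\<integral>\<^sup>+ t. ennreal (?LB t) + (\<Sum>m. ennreal (w m) * ennreal (?LG m t)) \<partial>torus_measure)"
    unfolding L1l2_upto_def by (rule nn_integral_mono)
  also have "\<dots> = L1l2_upto K B + (\<Sum>m. ennreal (w m) * L1l2_upto K (G m))"
  proof -
    have mB: "(\<lambda>t. ennreal (?LB t)) \<in> borel_measurable torus_measure"
      by (rule borel_measurable_L2_set_norm[OF B])
    have mG: "(\<lambda>t. ennreal (?LG m t)) \<in> borel_measurable torus_measure" for m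
      by (rule borel_measurable_L2_set_norm[OF G])
    then show ?thesis
      unfolding L1l2_upto_def using mB
      by (simp add: nn_integral_add nn_integral_suminf nn_integral_cmult)
  qed
  finally show ?thesis .
qed

lemma L1l2_le_if_upto_le:
  assumes "\<And>k. g k \<in> borel_measurable lborel" "\<And>K. L1l2_upto K g \<le> a * L1l2_upto K h"
  shows "L1l2 g \<le> a * L1l2 h"
  unfolding L1l2_eq_SUP_upto[OF assms(1)]
  using assms(2) L1l2_upto_le_L1l2 by (meson SUP_least mult_left_mono order_trans zero_le)

lemma ennreal_absorb:
  fixes X Y :: ennreal
  assumes "X \<noteq> top" "X \<le> Y + ennreal \<delta> * X" "0 \<le> \<delta>" "0 \<le> c" "1 \<le> c * (1 - \<delta>)"
  shows "X \<le> ennreal c * Y"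
proof (cases Y)
  case (real y)
  obtain x where x: "X = ennreal x" "0 \<le> x"
    using assms(1) ennreal_cases by auto
  then have "ennreal x \<le> ennreal (y + \<delta> * x)"
    using assms(2,3) real by (simp add: ennreal_mult ennreal_plus)
  then have "x \<le> y + \<delta> * x"
    using assms(3) real x(2) by (subst (asm) ennreal_le_iff) auto
  then have "c * ((1 - \<delta>) * x) \<le> c * y"
    using assms(4) by (intro mult_left_mono) (auto simp: algebra_simps)
  moreover have "x \<le> c * (1 - \<delta>) * x"
    using mult_right_mono[OF assms(5) x(2)] by simp
  ultimately have "x \<le> c * y"
    by (simp add: mult.assoc)
  then show ?thesis
    using x real assms(4) by (simp add: ennreal_mult[symmetric] ennreal_leI)
next
  case top
  with assms(3-5) show ?thesis
    by (cases "c = 0") (auto simp: ennreal_mult_top)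
qed

lemma one_minus_mult_exp_le: "(1 - x) * exp x \<le> (1::real)"
proof -
  have "(1 - x) * exp x \<le> exp (- x) * exp x"
    using exp_ge_add_one_self[of "- x"] by (intro mult_right_mono) auto
  then show ?thesis
    by (simp add: exp_minus)
qed

lemma exp_minus_one_sums: "(\<lambda>m. x ^ Suc m / fact (Suc m)) sums (exp x - 1 :: real)"
  using exp_converges[of x] by (subst sums_Suc_iff) (simp add: divide_inverse_commute)

section \<open>The comparison argument\<close>

locale bernstein_discretization =
  fixes d M :: "nat \<Rightarrow> nat" and C \<epsilon> :: real
    and f :: "nat \<Rightarrow> real \<Rightarrow> complex" and c :: "nat \<Rightarrow> nat \<Rightarrow> complex"
  assumes d_pos: "\<And>k. d k > 0" and M_pos: "\<And>k. M k > 0"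
    and C_pos: "C > 0" and eps_nonneg: "0 \<le> \<epsilon>"
    and d_le_M: "\<And>k. real (d k) \<le> \<epsilon> / C * real (M k)"
    and bernstein: "\<And>g. (\<And>k. g k \<in> H1 (d k)) \<Longrightarrow>
          L1l2 (\<lambda>k t. vector_derivative (g k) (at t) / of_nat (d k)) \<le> ennreal C * L1l2 g"
    and f_eq: "\<And>k. f k = trig_poly_deriv (c k) (d k) 0"
begin

definition scaled_deriv :: "nat \<Rightarrow> nat \<Rightarrow> real \<Rightarrow> complex" where
  "scaled_deriv m k t = trig_poly_deriv (c k) (d k) m t / of_nat (d k) ^ m"

definition weight :: "nat \<Rightarrow> real" where
  "weight m = (\<epsilon> / C) ^ m / fact m"

lemma weight_nonneg: "0 \<le> weight m"
  using eps_nonneg C_pos by (simp add: weight_def)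

lemma scaled_deriv_0: "scaled_deriv 0 = f"
  by (simp add: fun_eq_iff scaled_deriv_def f_eq)

lemma borel_measurable_scaled_deriv: "scaled_deriv m k \<in> borel_measurable lborel"
  unfolding scaled_deriv_def[abs_def]
  by (intro borel_measurable_divide borel_measurable_trig_poly_deriv borel_measurable_const)

lemma borel_measurable_f: "f k \<in> borel_measurable lborel"
  unfolding f_eq by (rule borel_measurable_trig_poly_deriv)

lemma continuous_on_f: "continuous_on S (f k)"
  unfolding f_eq by (rule continuous_on_trig_poly_deriv)

lemma weight_mult_norm_scaled_deriv:
  "weight m * norm (scaled_deriv m k t)
     = norm (trig_poly_deriv (c k) (d k) m t) * (\<epsilon> / (C * d k)) ^ m / fact m"
  by (simp add: weight_def scaled_deriv_def norm_divide norm_power power_divide power_mult_distrib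
      field_simps)

lemma summable_taylor_majorant: "summable (\<lambda>m. weight (Suc m) * norm (scaled_deriv (Suc m) k t))"
  unfolding weight_mult_norm_scaled_deriv
  using summable_Suc_iff[where
      f = "\<lambda>m. norm (trig_poly_deriv (c k) (d k) m t) * (\<epsilon> / (C * d k)) ^ m / fact m"]
  by (simp add: summable_trig_poly_deriv_taylor)

lemma norm_f_increment_le:
  assumes "\<bar>s - t\<bar> \<le> 1 / real (M k)"
  shows "norm (f k s - f k t) \<le> (\<Sum>m. weight (Suc m) * norm (scaled_deriv (Suc m) k t))"
proof -
  let ?T = "\<lambda>m. norm (trig_poly_deriv (c k) (d k) m t)"
  have "norm (f k s - f k t) \<le> (\<Sum>m. ?T (Suc m) * (1 / real (M k)) ^ Suc m / fact (Suc m))"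
    unfolding f_eq using assms by (rule norm_trig_poly_increment_le)
  also have "\<dots> \<le> (\<Sum>m. weight (Suc m) * norm (scaled_deriv (Suc m) k t))"
  proof (rule suminf_le)
    have "1 / real (M k) \<le> \<epsilon> / (C * d k)"
      using d_le_M[of k] d_pos[of k] M_pos[of k] C_pos by (simp add: field_simps)
    then show "?T (Suc m) * (1 / real (M k)) ^ Suc m / fact (Suc m)
                 \<le> weight (Suc m) * norm (scaled_deriv (Suc m) k t)" for m
      unfolding weight_mult_norm_scaled_deriv
      by (intro divide_right_mono mult_left_mono power_mono) auto
    show "summable (\<lambda>m. ?T (Suc m) * (1 / real (M k)) ^ Suc m / fact (Suc m))"
      using summable_Suc_iff[where f = "\<lambda>m. ?T m * (1 / real (M k)) ^ m / fact m"]
      by (simp add: summable_trig_poly_deriv_taylor)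
  qed (rule summable_taylor_majorant)
  finally show ?thesis .
qed

lemma has_vector_derivative_scaled_deriv:
  "(scaled_deriv m k has_vector_derivative of_nat (d k) * scaled_deriv (Suc m) k t) (at t)"
proof -
  have "(scaled_deriv m k has_vector_derivative
          trig_poly_deriv (c k) (d k) (Suc m) t / of_nat (d k) ^ m) (at t)"
    unfolding scaled_deriv_def[abs_def]
    by (intro has_vector_derivative_divide has_vector_derivative_trig_poly_deriv)
  moreover have "trig_poly_deriv (c k) (d k) (Suc m) t / of_nat (d k) ^ m
                   = of_nat (d k) * scaled_deriv (Suc m) k t"
    using d_pos[of k] by (simp add: scaled_deriv_def field_simps)
  ultimately show ?thesis
    by simp
qed

lemma L1l2_upto_scaled_deriv_Suc_le:
  "L1l2_upto K (scaled_deriv (Suc m)) \<le> ennreal C * L1l2_upto K (scaled_deriv m)"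
proof -
  define g where "g k t = (if k < K then scaled_deriv m k t else 0)" for k t
  have "g k \<in> H1 (d k)" for k
    by (cases "k < K")
      (simp_all add: g_def[abs_def] scaled_deriv_def[abs_def] trig_poly_deriv_divide_in_H1 zero_in_H1)
  moreover have "vector_derivative (g k) (at t) / of_nat (d k)
                   = (if k < K then scaled_deriv (Suc m) k t else 0)" for k t
  proof (cases "k < K")
    case True
    then have "vector_derivative (g k) (at t) = of_nat (d k) * scaled_deriv (Suc m) k t"
      unfolding g_def[abs_def] by (simp add: vector_derivative_at has_vector_derivative_scaled_deriv)
    with True show ?thesis
      using d_pos[of k] by simp
  next
    case False
    then show ?thesis
      by (simp add: g_def[abs_def] vector_derivative_at)
  qed
  ultimately have "L1l2 (\<lambda>k t. if k < K then scaled_deriv (Suc m) k t else 0) \<le> ennreal C * L1l2 g"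
    using bernstein[of g] by simp
  then show ?thesis
    unfolding g_def L1l2_truncation .
qed

lemma L1l2_upto_scaled_deriv_le: "L1l2_upto K (scaled_deriv m) \<le> ennreal (C ^ m) * L1l2_upto K f"
proof (induction m)
  case 0
  then show ?case
    by (simp add: scaled_deriv_0)
next
  case (Suc m)
  have "L1l2_upto K (scaled_deriv (Suc m)) \<le> ennreal C * L1l2_upto K (scaled_deriv m)"
    by (rule L1l2_upto_scaled_deriv_Suc_le)
  also have "\<dots> \<le> ennreal C * (ennreal (C ^ m) * L1l2_upto K f)"
    using Suc by (rule mult_left_mono) simp
  finally show ?case
    using C_pos by (simp add: ennreal_mult mult.assoc)
qed

lemma L1l2_upto_le_add_taylor:
  fixes A :: "nat \<Rightarrow> real \<Rightarrow> 'a::real_normed_vector" and B :: "nat \<Rightarrow> real \<Rightarrow> 'b::real_normed_vector"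
  assumes "\<And>k. B k \<in> borel_measurable lborel"
    and "\<And>k t. k < K \<Longrightarrow> t \<in> {0..<1} \<Longrightarrow>
           norm (A k t) \<le> norm (B k t) + (\<Sum>m. weight (Suc m) * norm (scaled_deriv (Suc m) k t))"
  shows "L1l2_upto K A \<le> L1l2_upto K B + ennreal (exp \<epsilon> - 1) * L1l2_upto K f"
proof -
  have "L1l2_upto K A
          \<le> L1l2_upto K B + (\<Sum>m. ennreal (weight (Suc m)) * L1l2_upto K (scaled_deriv (Suc m)))"
    using assms weight_nonneg summable_taylor_majorant borel_measurable_scaled_deriv
    by (intro L1l2_upto_le_add_suminf)
  also have "(\<Sum>m. ennreal (weight (Suc m)) * L1l2_upto K (scaled_deriv (Suc m)))
               \<le> (\<Sum>m. ennreal (\<epsilon> ^ Suc m / fact (Suc m)) * L1l2_upto K f)"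
  proof (rule suminf_le)
    fix m
    have "weight (Suc m) * C ^ Suc m = \<epsilon> ^ Suc m / fact (Suc m)"
      using C_pos by (simp add: weight_def power_divide)
    then have weight_C:
      "ennreal (weight (Suc m)) * ennreal (C ^ Suc m) = ennreal (\<epsilon> ^ Suc m / fact (Suc m))"
      using weight_nonneg C_pos by (simp flip: ennreal_mult)
    have "ennreal (weight (Suc m)) * L1l2_upto K (scaled_deriv (Suc m))
            \<le> ennreal (weight (Suc m)) * (ennreal (C ^ Suc m) * L1l2_upto K f)"
      by (intro mult_left_mono L1l2_upto_scaled_deriv_le) simp
    also have "\<dots> = ennreal (\<epsilon> ^ Suc m / fact (Suc m)) * L1l2_upto K f"
      by (simp only: mult.assoc[symmetric] weight_C)
    finally show "ennreal (weight (Suc m)) * L1l2_upto K (scaled_deriv (Suc m))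
                 \<le> ennreal (\<epsilon> ^ Suc m / fact (Suc m)) * L1l2_upto K f" .
  qed (auto intro: summableI)
  also have "\<dots> = (\<Sum>m. ennreal (\<epsilon> ^ Suc m / fact (Suc m))) * L1l2_upto K f"
    by (rule ennreal_suminf_multc)
  also have "\<dots> = ennreal (exp \<epsilon> - 1) * L1l2_upto K f"
    by (subst suminf_ennreal_eq[OF _ exp_minus_one_sums]) (use eps_nonneg in auto)
  finally show ?thesis
    by (simp add: add_left_mono)
qed

lemma L1l2_upto_condE_abs_le:
  "L1l2_upto K (\<lambda>k. condE (M k) (\<lambda>t. cmod (f k t))) \<le> ennreal (exp \<epsilon>) * L1l2_upto K f"
proof -
  have "L1l2_upto K (\<lambda>k. condE (M k) (\<lambda>t. cmod (f k t)))
          \<le> L1l2_upto K f + ennreal (exp \<epsilon> - 1) * L1l2_upto K f"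
  proof (rule L1l2_upto_le_add_taylor)
    fix k t assume t: "t \<in> {0..<1::real}"
    have "norm (condE (M k) (\<lambda>t. cmod (f k t)) t - cmod (f k t))
                 \<le> (\<Sum>m. weight (Suc m) * norm (scaled_deriv (Suc m) k t))"
    proof (rule norm_condE_diff_le[OF M_pos t])
      show "continuous_on {0..1} (\<lambda>t. cmod (f k t))"
        by (intro continuous_intros continuous_on_f)
      show "norm (cmod (f k s) - cmod (f k t)) \<le> (\<Sum>m. weight (Suc m) * norm (scaled_deriv (Suc m) k t))"
        if "\<bar>s - t\<bar> \<le> 1 / real (M k)" for s
        using norm_triangle_ineq3[of "f k s" "f k t"] norm_f_increment_le[OF that] by simp
    qed
    then show "norm (condE (M k) (\<lambda>t. cmod (f k t)) t)
                 \<le> norm (f k t) + (\<Sum>m. weight (Suc m) * norm (scaled_deriv (Suc m) k t))"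
      using norm_triangle_sub[of "condE (M k) (\<lambda>t. cmod (f k t)) t" "cmod (f k t)"] by simp
  qed (rule borel_measurable_f)
  also have "\<dots> = ennreal (1 + (exp \<epsilon> - 1)) * L1l2_upto K f"
    using eps_nonneg by (subst ennreal_plus) (auto simp: distrib_right)
  finally show ?thesis
    by simp
qed

lemma L1l2_upto_le_condE_add:
  "L1l2_upto K f \<le> L1l2_upto K (\<lambda>k. condE (M k) (f k)) + ennreal (exp \<epsilon> - 1) * L1l2_upto K f"
proof (rule L1l2_upto_le_add_taylor)
  fix k t assume "t \<in> {0..<1::real}"
  then have "norm (condE (M k) (f k) t - f k t)
               \<le> (\<Sum>m. weight (Suc m) * norm (scaled_deriv (Suc m) k t))"
    using M_pos continuous_on_f norm_f_increment_le by (intro norm_condE_diff_le)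
  then show "norm (f k t)
               \<le> norm (condE (M k) (f k) t) + (\<Sum>m. weight (Suc m) * norm (scaled_deriv (Suc m) k t))"
    using norm_triangle_sub[of "f k t" "condE (M k) (f k) t"] by (simp add: norm_minus_commute)
qed (rule borel_measurable_condE)

lemma L1l2_upto_f_less_top: "L1l2_upto K f < top"
  using norm_trig_poly_deriv_le[where m = 0]
  by (intro L1l2_upto_less_top[where B = "\<lambda>k. \<Sum>j\<le>d k. norm (c k j)"]) (simp add: f_eq)

lemma L1l2_condE_abs_le:
  "ennreal (1 - \<epsilon>) * L1l2 (\<lambda>k. condE (M k) (\<lambda>t. cmod (f k t))) \<le> L1l2 f"
proof -
  have "L1l2 (\<lambda>k. condE (M k) (\<lambda>t. cmod (f k t))) \<le> ennreal (exp \<epsilon>) * L1l2 f"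
    using borel_measurable_condE L1l2_upto_condE_abs_le by (rule L1l2_le_if_upto_le)
  then have "ennreal (1 - \<epsilon>) * L1l2 (\<lambda>k. condE (M k) (\<lambda>t. cmod (f k t)))
               \<le> ennreal ((1 - \<epsilon>) * exp \<epsilon>) * L1l2 f"
    by (simp add: ennreal_mult'' mult.assoc mult_left_mono)
  also have "\<dots> \<le> 1 * L1l2 f"
    using one_minus_mult_exp_le[of \<epsilon>] by (intro mult_right_mono) auto
  finally show ?thesis
    by simp
qed

lemma L1l2_le_condE:
  assumes "\<epsilon> < 1/2"
  shows "L1l2 f \<le> ennreal ((1 - \<epsilon>) / (1 - 2 * \<epsilon>)) * L1l2 (\<lambda>k. condE (M k) (f k))"
proof (rule L1l2_le_if_upto_le[OF borel_measurable_f])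
  fix K
  show "L1l2_upto K f \<le> ennreal ((1 - \<epsilon>) / (1 - 2 * \<epsilon>)) * L1l2_upto K (\<lambda>k. condE (M k) (f k))"
  proof (rule ennreal_absorb)
    show "L1l2_upto K f \<noteq> top"
      using L1l2_upto_f_less_top by (rule less_imp_neq)
    show "1 \<le> (1 - \<epsilon>) / (1 - 2 * \<epsilon>) * (1 - (exp \<epsilon> - 1))"
      using one_minus_mult_exp_le[of \<epsilon>] assms by (simp add: field_simps)
  qed (use L1l2_upto_le_condE_add eps_nonneg assms in auto)
qed

end

text \<open>
  The lacunarity of \<open>d\<close> (hypotheses on \<open>\<alpha>\<close>) only serves to guarantee that a Bernstein
  constant \<open>C\<close> exists; the argument itself does not use it.
\<close>

theorem lemma2p10:
  fixes \<alpha> C \<epsilon> :: real and d M :: "nat \<Rightarrow> nat" and f :: "nat \<Rightarrow> real \<Rightarrow> complex"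
  assumes alpha_pos: "\<alpha> > 0"
    and d_pos: "\<And>k. d k > 0"
    and d_lac: "\<And>k. real (d (Suc k)) \<ge> (1 + \<alpha>) * real (d k)"
    and C_pos: "C > 0"
    and C_bern: "\<And>g. (\<And>k. g k \<in> H1 (d k)) \<Longrightarrow>
        L1l2 (\<lambda>k t. vector_derivative (g k) (at t) / of_nat (d k)) \<le> ennreal C * L1l2 g"
    and f_H1: "\<And>k. f k \<in> H1 (d k)"
    and eps: "0 < \<epsilon>" "\<epsilon> < 1/2"
    and M_pos: "\<And>k. M k > 0"
    and dM: "\<And>k. real (d k) \<le> \<epsilon> / C * real (M k)"
  shows "ennreal (1 - \<epsilon>) * L1l2 (\<lambda>k. condE (M k) (\<lambda>t. cmod (f k t))) \<le> L1l2 f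
       \<and> L1l2 f \<le> ennreal ((1 - \<epsilon>) / (1 - 2 * \<epsilon>)) * L1l2 (\<lambda>k. condE (M k) (f k))"
proof -
  have "\<forall>k. \<exists>ck. f k = trig_poly_deriv ck (d k) 0"
    using f_H1 unfolding H1_eq_range by blast
  from choice[OF this] obtain c where "\<And>k. f k = trig_poly_deriv (c k) (d k) 0"
    by blast
  then interpret bernstein_discretization d M C \<epsilon> f c
    using d_pos M_pos C_pos eps dM C_bern by unfold_locales auto
  show ?thesis
    using L1l2_condE_abs_le L1l2_le_condE[OF eps(2)] ..
qed

end
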